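(* Let $(G,M)$ be a transformation group, let $K\subset L\subset N$ be subsets of $M$, and let $\tau$ be an admissible topology on $\mathcal{E}^G_K(L,N)$. Suppose $H$ is a subgroup of $G_K(N)$ and the restriction map $r:G_K(N)\to\mathcal{E}^G_K(L,N)^\tau$, $r(g)=g|_L$, has a local section $s:\mathcal{U}\to H\subset G_K(N)$ at $i_L$. Then: (1) The restriction map $r|_H:H\to\mathcal{E}^H(L,N)^\tau$ is a principal bundle with structure group $H_L$. (2)(i) The topology $\tau$ coincides with the quotient topology induced by $r$. (ii) $\mathcal{E}^H(L,N)^\tau$ is open in $\mathcal{E}^G_K(L,N)^\tau$. (iii) If $H$ is a normal subgroup of $G_K(N)$, then (a) each orbit of $H$ is closed and open in $\mathcal{E}^G_K(L,N)^\tau$ (in particular $\mathcal{E}^H(L,N)^\tau$ is closed and open in $\mathcal{E}^G_K(L,N)^\tau$), and (b) if $H\subset G_K(N)_0$, then $\mathcal{E}^H(L,N)^\tau=\mathcal{E}^G_K(L,N)^\tau_0$.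
   Context: A transformation group $(G,M)$ consists of a locally compact, $\sigma$-compact Hausdorff space $M$ and a topological group $G$ acting continuously and effectively on $M$; each $g\in G$ is identified with a homeomorphism of $M$. For subsets $K,N\subset M$: $G_K=\{g\in G:g|_K=\mathrm{id}_K\}$, $G(N)=G_{M\setminus N}$, $G_K(N)=G_K\cap G(N)$; for a subgroup $H$, $H_0$ is the connected component of the identity and $H_L=\{h\in H:h|_L=\mathrm{id}_L\}$. For $K\subset L\subset N$, $\mathcal{E}^G_K(L,N)=\{g|_L:L\to M\mid g\in G_K(N)\}$; $G_K(N)$ acts on it by $g\cdot f=gf$ and $r$ is the orbit map at the inclusion $i_L:L\subset M$. A topology on $\mathcal{E}^G_K(L,N)$ is admissible if this action is continuous; $\mathcal{E}^G_K(L,N)^\tau$ denotes the set with topology $\tau$, and for a subset $\mathcal{F}$, $\mathcal{F}^\tau$ has the subspace topology and $\mathcal{F}^\tau_0$ is the connected component of $i_L$. For a subgroup $H\subset G_K(N)$, $\mathcal{E}^H(L,N)=\{h|_L:h\in H\}$. A local section of a map $f:X\to Y$ at $y$ is a map $s:U\to X$ on a neighborhood $U$ of $y$ with $fs=$ the inclusion of $U$. *)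

theory Defs
  imports "HOL-Analysis.Analysis"
begin

definition sigma_compact_space :: "'a topology \<Rightarrow> bool" where
  "sigma_compact_space X \<longleftrightarrow>
     (\<exists>C :: nat \<Rightarrow> 'a set. (\<forall>n. compactin X (C n)) \<and> (\<Union>n. C n) = topspace X)"

text \<open>A transformation group (G,M): the space M is the carrier type 'm with the
  topology TM (topspace TM = UNIV); G is a set of homeomorphisms of M (effective action,
  each element identified with a homeomorphism), carrying a group topology TG with
  topspace TG = G, group law composition, and the evaluation action G x M -> M continuous.\<close>
definition transformation_group :: "'m topology \<Rightarrow> ('m \<Rightarrow> 'm) topology \<Rightarrow> bool" where
  "transformation_group TM TG \<longleftrightarrow>
     topspace TM = UNIV \<and> Hausdorff_space TM \<and> locally_compact_space TM \<and>
     sigma_compact_space TM \<and>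
     (\<forall>g \<in> topspace TG. homeomorphic_map TM TM g) \<and>
     id \<in> topspace TG \<and>
     (\<forall>g \<in> topspace TG. \<forall>h \<in> topspace TG. g \<circ> h \<in> topspace TG) \<and>
     (\<forall>g \<in> topspace TG. inv g \<in> topspace TG) \<and>
     continuous_map (prod_topology TG TG) TG (\<lambda>(g, h). g \<circ> h) \<and>
     continuous_map TG TG inv \<and>
     continuous_map (prod_topology TG TM) TM (\<lambda>(g, x). g x)"

definition fixing :: "('m \<Rightarrow> 'm) set \<Rightarrow> 'm set \<Rightarrow> ('m \<Rightarrow> 'm) set" where
  "fixing G K = {g \<in> G. \<forall>x \<in> K. g x = x}"

text \<open>G_K(N) = G_K \<inter> G_{M - N}.\<close>
definition supp_group :: "('m \<Rightarrow> 'm) set \<Rightarrow> 'm set \<Rightarrow> 'm set \<Rightarrow> ('m \<Rightarrow> 'm) set" where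
  "supp_group G K N = fixing G K \<inter> fixing G (- N)"

text \<open>Restriction g|_L : L -> M, represented as an extensional function.\<close>
definition restr :: "'m set \<Rightarrow> ('m \<Rightarrow> 'm) \<Rightarrow> ('m \<Rightarrow> 'm)" where
  "restr L g = restrict g L"

definition incl :: "'m set \<Rightarrow> ('m \<Rightarrow> 'm)" where
  "incl L = restrict id L"

text \<open>E^H(L,N) = {h|_L : h \<in> H}; E^G_K(L,N) = emb_set (supp_group G K N) L.\<close>
definition emb_set :: "('m \<Rightarrow> 'm) set \<Rightarrow> 'm set \<Rightarrow> ('m \<Rightarrow> 'm) set" where
  "emb_set H L = restr L ` H"

definition emb_act :: "'m set \<Rightarrow> ('m \<Rightarrow> 'm) \<Rightarrow> ('m \<Rightarrow> 'm) \<Rightarrow> ('m \<Rightarrow> 'm)" where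
  "emb_act L g f = restrict (g \<circ> f) L"

definition admissible ::
  "'m set \<Rightarrow> ('m \<Rightarrow> 'm) topology \<Rightarrow> ('m \<Rightarrow> 'm) set \<Rightarrow> ('m \<Rightarrow> 'm) topology \<Rightarrow> bool" where
  "admissible L TG GKN T \<longleftrightarrow>
     topspace T = emb_set GKN L \<and>
     continuous_map (prod_topology (subtopology TG GKN) T) T (\<lambda>(g, f). emb_act L g f)"

definition is_subgroup :: "('m \<Rightarrow> 'm) set \<Rightarrow> ('m \<Rightarrow> 'm) set \<Rightarrow> bool" where
  "is_subgroup H G \<longleftrightarrow> H \<subseteq> G \<and> id \<in> H \<and>
     (\<forall>g \<in> H. \<forall>h \<in> H. g \<circ> h \<in> H) \<and> (\<forall>h \<in> H. inv h \<in> H)"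

definition is_normal_subgroup :: "('m \<Rightarrow> 'm) set \<Rightarrow> ('m \<Rightarrow> 'm) set \<Rightarrow> bool" where
  "is_normal_subgroup H G \<longleftrightarrow> is_subgroup H G \<and>
     (\<forall>g \<in> G. \<forall>h \<in> H. g \<circ> h \<circ> inv g \<in> H)"

definition nbhd :: "'a topology \<Rightarrow> 'a set \<Rightarrow> 'a \<Rightarrow> bool" where
  "nbhd X U x \<longleftrightarrow> U \<subseteq> topspace X \<and> (\<exists>V. openin X V \<and> x \<in> V \<and> V \<subseteq> U)"

definition local_section_at ::
  "'a topology \<Rightarrow> 'b topology \<Rightarrow> ('a \<Rightarrow> 'b) \<Rightarrow> 'b \<Rightarrow> 'b set \<Rightarrow> ('b \<Rightarrow> 'a) \<Rightarrow> bool" where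
  "local_section_at X Y f y U s \<longleftrightarrow>
     nbhd Y U y \<and> continuous_map (subtopology Y U) X s \<and> (\<forall>u \<in> U. f (s u) = u)"

definition principal_bundle ::
  "'p topology \<Rightarrow> 'b topology \<Rightarrow> 'k topology \<Rightarrow> ('p \<Rightarrow> 'k \<Rightarrow> 'p) \<Rightarrow> ('k \<Rightarrow> 'k \<Rightarrow> 'k)
    \<Rightarrow> ('p \<Rightarrow> 'b) \<Rightarrow> bool" where
  "principal_bundle P B K act kmult prj \<longleftrightarrow>
     continuous_map P B prj \<and> prj ` topspace P = topspace B \<and>
     continuous_map (prod_topology P K) P (\<lambda>(p, k). act p k) \<and>
     (\<forall>p \<in> topspace P. \<forall>k \<in> topspace K. prj (act p k) = prj p) \<and>
     (\<forall>b \<in> topspace B. \<exists>V \<phi>. openin B V \<and> b \<in> V \<and>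
        homeomorphic_map (subtopology P {p \<in> topspace P. prj p \<in> V})
                         (prod_topology (subtopology B V) K) \<phi> \<and>
        (\<forall>p \<in> topspace P. prj p \<in> V \<longrightarrow> fst (\<phi> p) = prj p) \<and>
        (\<forall>p \<in> topspace P. prj p \<in> V \<longrightarrow>
           (\<forall>k \<in> topspace K. snd (\<phi> (act p k)) = kmult (snd (\<phi> p)) k)))"

end

theory Submission
  imports Defs
begin

(*
  Translating the local section s by g0 in G_K(N) gives local sections
  f |-> g0 o s(g0^-1 . f) of the restriction map r around every point of
  E^G_K(L,N), with values in the coset g0 H.  A continuous surjection admitting
  local sections everywhere is a quotient map.  The translated sections also
  show that r maps every coset g H onto an open set; this gives openness of
  E^H(L,N) = r(H) and, for normal H, of the orbits r(H g) = r(g H), which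
  partition the space and are therefore closed as well.  Over a local section
  sigma with values in H, the map p |-> (r p, sigma(r p)^-1 o p) trivialises
  r|_H with fibre H_L.  Finally, if H lies in the identity component, E^H(L,N)
  is a clopen set containing i_L and contained in the connected set
  r(G_K(N)_0), hence it is the component of i_L.
*)

lemma continuous_map_compose_binop:
  assumes "continuous_map (prod_topology X Y) W (\<lambda>(a, b). F a b)"
    and "continuous_map Z X f" and "continuous_map Z Y g"
  shows "continuous_map Z W (\<lambda>z. F (f z) (g z))"
  using continuous_map_compose[OF continuous_map_paired[THEN iffD2, OF conjI[OF assms(2,3)]] assms(1)]
  by (simp add: o_def)

lemma quotient_map_if_local_sections:
  assumes f: "continuous_map X Y f" and surj: "f ` topspace X = topspace Y"
    and sections: "\<And>y. y \<in> topspace Y \<Longrightarrow> \<exists>V \<sigma>. openin Y V \<and> y \<in> V \<and>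
        continuous_map (subtopology Y V) X \<sigma> \<and> (\<forall>v \<in> V. f (\<sigma> v) = v)"
  shows "quotient_map X Y f"
  unfolding quotient_map_def
proof (intro conjI allI impI surj iffI)
  fix U assume U: "U \<subseteq> topspace Y" and "openin X {x \<in> topspace X. f x \<in> U}"
  then have pre: "openin X {x \<in> topspace X. f x \<in> U}" by blast
  show "openin Y U"
    unfolding openin_subopen[of Y U]
  proof
    fix y assume "y \<in> U"
    then obtain V \<sigma> where V: "openin Y V" "y \<in> V" and \<sigma>: "continuous_map (subtopology Y V) X \<sigma>"
      and f\<sigma>: "\<forall>v \<in> V. f (\<sigma> v) = v"
      using sections U by blast
    have "{v \<in> topspace (subtopology Y V). \<sigma> v \<in> {x \<in> topspace X. f x \<in> U}} = V \<inter> U"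
      using \<sigma> f\<sigma> openin_subset[OF V(1)] unfolding continuous_map_def by auto
    then have "openin (subtopology Y V) (V \<inter> U)"
      using openin_continuous_map_preimage[OF \<sigma> pre] by simp
    then have "openin Y (V \<inter> U)" using openin_trans_full V(1) by metis
    then show "\<exists>W. openin Y W \<and> y \<in> W \<and> W \<subseteq> U" using V(2) \<open>y \<in> U\<close> by blast
  qed
next
  fix U assume "openin Y U"
  then show "openin X {x \<in> topspace X. f x \<in> U}" using openin_continuous_map_preimage[OF f] by blast
qed

lemma closedin_if_open_partition:
  assumes "\<And>x. x \<in> topspace X \<Longrightarrow> openin X (P x)"
    and "\<And>x. x \<in> topspace X \<Longrightarrow> x \<in> P x"
    and "\<And>x y. x \<in> topspace X \<Longrightarrow> y \<in> P x \<Longrightarrow> P y = P x"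
    and x: "x \<in> topspace X"
  shows "closedin X (P x)"
proof -
  have "topspace X - P x = \<Union> (P ` (topspace X - P x))"
  proof
    show "topspace X - P x \<subseteq> \<Union> (P ` (topspace X - P x))" using assms(2) by blast
    show "\<Union> (P ` (topspace X - P x)) \<subseteq> topspace X - P x"
    proof clarify
      fix y z assume y: "y \<in> topspace X" "y \<notin> P x" and z: "z \<in> P y"
      have "P y \<subseteq> topspace X" using openin_subset assms(1)[OF y(1)] .
      then have "z \<in> topspace X" using z by blast
      moreover have "z \<notin> P x"
      proof
        assume "z \<in> P x"
        then have "P x = P y" using assms(3)[OF x] assms(3)[OF y(1) z] by simp
        then show False using y assms(2) by blast
      qed
      ultimately show "z \<in> topspace X - P x" by blast
    qed
  qed
  moreover have "openin X (\<Union> (P ` (topspace X - P x)))" using assms(1) by blast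
  ultimately show ?thesis
    unfolding closedin_def using openin_subset[OF assms(1)[OF x]] by simp
qed

lemma is_subgroup_Int: "is_subgroup A G \<Longrightarrow> is_subgroup B G \<Longrightarrow> is_subgroup (A \<inter> B) G"
  unfolding is_subgroup_def by blast

lemma restr_eq_iff: "restr L a = restr L b \<longleftrightarrow> (\<forall>x \<in> L. a x = b x)"
  unfolding restr_def by (metis restrict_ext restrict_apply')

lemma fixing_subset: "fixing G K \<subseteq> G"
  by (auto simp: fixing_def)

lemma restr_comp_fixing: "k \<in> fixing H L \<Longrightarrow> restr L (p \<circ> k) = restr L p"
  unfolding restr_eq_iff fixing_def by simp

lemma incl_eq_restr_id: "incl L = restr L id"
  unfolding incl_def restr_def ..

lemma emb_act_restr: "emb_act L g (restr L h) = restr L (g \<circ> h)"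
  unfolding emb_act_def restr_def by (auto simp: fun_eq_iff)

lemma emb_act_emb_act: "emb_act L g (emb_act L h f) = emb_act L (g \<circ> h) f"
  unfolding emb_act_def by (auto simp: fun_eq_iff)

locale topological_bij_group =
  fixes TG :: "('a \<Rightarrow> 'a) topology"
  assumes bij: "g \<in> topspace TG \<Longrightarrow> bij g"
    and id_in: "id \<in> topspace TG"
    and comp_continuous: "continuous_map (prod_topology TG TG) TG (\<lambda>(g, h). g \<circ> h)"
    and inv_continuous: "continuous_map TG TG inv"
begin

lemma inv_comp_cancel: "g \<in> topspace TG \<Longrightarrow> inv g \<circ> g = id"
  by (simp add: bij bij_is_inj)

lemma comp_inv_cancel: "g \<in> topspace TG \<Longrightarrow> g \<circ> inv g = id"
  by (metis bij bij_is_surj surj_iff)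

lemma comp_in: "g \<in> topspace TG \<Longrightarrow> h \<in> topspace TG \<Longrightarrow> g \<circ> h \<in> topspace TG"
  using continuous_map_image_subset_topspace[OF comp_continuous]
  unfolding image_subset_iff topspace_prod_topology by auto

lemma inv_in: "g \<in> topspace TG \<Longrightarrow> inv g \<in> topspace TG"
  using continuous_map_image_subset_topspace[OF inv_continuous] by blast

lemma comp_continuous_on:
  "continuous_map (prod_topology (subtopology TG A) (subtopology TG B)) TG (\<lambda>(g, h). g \<circ> h)"
  using continuous_map_from_subtopology[OF comp_continuous, of "A \<times> B"] by (simp add: subtopology_Times)

lemma continuous_map_comp:
  "continuous_map Z TG f \<Longrightarrow> continuous_map Z TG g \<Longrightarrow> continuous_map Z TG (\<lambda>z. f z \<circ> g z)"
  by (rule continuous_map_compose_binop[OF comp_continuous])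

lemma continuous_map_inv: "continuous_map Z TG f \<Longrightarrow> continuous_map Z TG (\<lambda>z. inv (f z))"
  using continuous_map_compose[OF _ inv_continuous] by (simp add: o_def)

lemma is_subgroup_fixing: "is_subgroup (fixing (topspace TG) A) (topspace TG)"
proof -
  have "inv g x = x" if "g \<in> topspace TG" "g x = x" for g x
    using inv_comp_cancel[OF that(1)] that(2) by (metis comp_apply id_apply)
  then show ?thesis
    unfolding is_subgroup_def fixing_def by (simp add: id_in comp_in inv_in)
qed

lemma is_subgroup_supp_group: "is_subgroup (supp_group (topspace TG) K N) (topspace TG)"
  unfolding supp_group_def by (intro is_subgroup_Int is_subgroup_fixing)

end

lemma transformation_group_imp_topological_bij_group:
  assumes "transformation_group TM TG"
  shows "topological_bij_group TG"
proof
  fix g assume "g \<in> topspace TG"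
  then have "homeomorphic_map TM TM g" and "topspace TM = UNIV"
    using assms unfolding transformation_group_def by auto
  then show "bij g"
    using homeomorphic_imp_injective_map homeomorphic_imp_surjective_map bij_def by metis
next
  show "id \<in> topspace TG"
    and "continuous_map (prod_topology TG TG) TG (\<lambda>(g, h). g \<circ> h)"
    and "continuous_map TG TG inv"
    using assms unfolding transformation_group_def by blast+
qed

text \<open>\<open>\<Gamma>\<close> stands for \<open>G\<^sub>K(N)\<close>: only its being a subgroup matters.\<close>
locale restriction_with_section = topological_bij_group TG
  for TG :: "('a \<Rightarrow> 'a) topology" +
  fixes \<Gamma> :: "('a \<Rightarrow> 'a) set" and L :: "'a set" and T :: "('a \<Rightarrow> 'a) topology"
    and H U :: "('a \<Rightarrow> 'a) set" and s :: "('a \<Rightarrow> 'a) \<Rightarrow> ('a \<Rightarrow> 'a)"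
  assumes subgroup: "is_subgroup \<Gamma> (topspace TG)"
    and admissible: "admissible L TG \<Gamma> T"
    and H_subgroup: "is_subgroup H \<Gamma>"
    and local_section: "local_section_at (subtopology TG \<Gamma>) T (restr L) (incl L) U s"
    and section_in_H: "s ` U \<subseteq> H"
begin

abbreviation orbit :: "('a \<Rightarrow> 'a) \<Rightarrow> ('a \<Rightarrow> 'a) set" where
  "orbit f \<equiv> (\<lambda>h. emb_act L h f) ` H"

lemma \<Gamma>_subset: "\<Gamma> \<subseteq> topspace TG"
  and id_in_\<Gamma>: "id \<in> \<Gamma>"
  and comp_in_\<Gamma>: "g \<in> \<Gamma> \<Longrightarrow> h \<in> \<Gamma> \<Longrightarrow> g \<circ> h \<in> \<Gamma>"
  and inv_in_\<Gamma>: "g \<in> \<Gamma> \<Longrightarrow> inv g \<in> \<Gamma>"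
  using subgroup unfolding is_subgroup_def by auto

lemma H_subset: "H \<subseteq> \<Gamma>"
  and id_in_H: "id \<in> H"
  and comp_in_H: "g \<in> H \<Longrightarrow> h \<in> H \<Longrightarrow> g \<circ> h \<in> H"
  and inv_in_H: "h \<in> H \<Longrightarrow> inv h \<in> H"
  using H_subgroup unfolding is_subgroup_def by auto

lemma H_subset_topspace: "H \<subseteq> topspace TG"
  using H_subset \<Gamma>_subset by blast

lemma topspace_subtopology_H: "topspace (subtopology TG H) = H"
  using H_subset_topspace by auto

lemma topspace_subtopology_fixing: "topspace (subtopology TG (fixing H L)) = fixing H L"
  using fixing_subset H_subset_topspace by auto

lemma topspace_T: "topspace T = restr L ` \<Gamma>"
  using admissible unfolding admissible_def emb_set_def by blast

lemma incl_in_topspace: "incl L \<in> topspace T"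
  by (simp add: topspace_T incl_eq_restr_id id_in_\<Gamma>)

lemma emb_act_id: "f \<in> topspace T \<Longrightarrow> emb_act L id f = f"
  by (auto simp: topspace_T emb_act_restr)

lemma emb_act_continuous:
  assumes "g \<in> \<Gamma>"
  shows "continuous_map T T (emb_act L g)"
proof -
  have "continuous_map T (subtopology TG \<Gamma>) (\<lambda>_. g)"
    using assms \<Gamma>_subset by auto
  from continuous_map_compose_binop[OF admissible[unfolded admissible_def, THEN conjunct2]
      this continuous_map_id]
  show ?thesis by simp
qed

lemma restr_continuous: "continuous_map (subtopology TG \<Gamma>) T (restr L)"
proof -
  have "continuous_map (subtopology TG \<Gamma>) T (\<lambda>_. incl L)"
    using incl_in_topspace by simp
  from continuous_map_compose_binop[OF admissible[unfolded admissible_def, THEN conjunct2]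
      continuous_map_id this]
  show ?thesis by (simp add: incl_eq_restr_id emb_act_restr)
qed

lemma translated_local_section:
  assumes g0: "g0 \<in> \<Gamma>"
  obtains V \<sigma> where "openin T V" and "restr L g0 \<in> V"
    and "continuous_map (subtopology T V) TG \<sigma>"
    and "\<And>f. f \<in> V \<Longrightarrow> restr L (\<sigma> f) = f" and "\<And>f. f \<in> V \<Longrightarrow> \<sigma> f \<in> (\<circ>) g0 ` H"
proof -
  obtain W where W: "openin T W" "incl L \<in> W" "W \<subseteq> U"
    using local_section unfolding local_section_at_def nbhd_def by blast
  have s_continuous: "continuous_map (subtopology T U) TG s"
    and s_section: "\<And>u. u \<in> U \<Longrightarrow> restr L (s u) = u"
    using local_section unfolding local_section_at_def continuous_map_in_subtopology by auto
  have g0_inv: "inv g0 \<in> \<Gamma>" and g0_top: "g0 \<in> topspace TG"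
    using g0 inv_in_\<Gamma> \<Gamma>_subset by auto
  define V where "V = {f \<in> topspace T. emb_act L (inv g0) f \<in> W}"
  define \<sigma> where "\<sigma> f = g0 \<circ> s (emb_act L (inv g0) f)" for f
  show thesis
  proof
    show "openin T V"
      unfolding V_def by (rule openin_continuous_map_preimage[OF emb_act_continuous[OF g0_inv] W(1)])
    show "restr L g0 \<in> V"
      unfolding V_def using g0 W(2)
      by (simp add: topspace_T emb_act_restr inv_comp_cancel[OF g0_top] incl_eq_restr_id)
    have "continuous_map (subtopology T V) (subtopology T U) (emb_act L (inv g0))"
      unfolding continuous_map_in_subtopology
      using continuous_map_from_subtopology[OF emb_act_continuous[OF g0_inv]] W(3)
      by (auto simp: V_def)
    then have "continuous_map (subtopology T V) TG (\<lambda>f. s (emb_act L (inv g0) f))"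
      using continuous_map_compose[OF _ s_continuous] by (simp add: o_def)
    moreover have "continuous_map (subtopology T V) TG (\<lambda>_. g0)"
      using g0_top by simp
    ultimately show "continuous_map (subtopology T V) TG \<sigma>"
      unfolding \<sigma>_def by (rule continuous_map_comp[rotated])
  next
    fix f assume f: "f \<in> V"
    then have u: "emb_act L (inv g0) f \<in> U" using W(3) V_def by auto
    have "restr L (\<sigma> f) = emb_act L g0 (restr L (s (emb_act L (inv g0) f)))"
      by (simp add: \<sigma>_def emb_act_restr)
    also have "\<dots> = emb_act L g0 (emb_act L (inv g0) f)"
      using s_section[OF u] by simp
    also have "\<dots> = f"
      using f by (simp add: emb_act_emb_act comp_inv_cancel[OF g0_top] emb_act_id V_def)
    finally show "restr L (\<sigma> f) = f" .
    show "\<sigma> f \<in> (\<circ>) g0 ` H"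
      using section_in_H u unfolding \<sigma>_def by blast
  qed
qed

lemma quotient_map_restr: "quotient_map (subtopology TG \<Gamma>) T (restr L)"
proof (rule quotient_map_if_local_sections[OF restr_continuous])
  show "restr L ` topspace (subtopology TG \<Gamma>) = topspace T"
    using \<Gamma>_subset by (simp add: topspace_T Int_absorb1)
next
  fix y assume "y \<in> topspace T"
  then obtain g0 where g0: "g0 \<in> \<Gamma>" "y = restr L g0" using topspace_T by blast
  obtain V \<sigma> where V: "openin T V" "restr L g0 \<in> V"
    and \<sigma>: "continuous_map (subtopology T V) TG \<sigma>"
    and lifts: "\<And>f. f \<in> V \<Longrightarrow> restr L (\<sigma> f) = f"
    and coset: "\<And>f. f \<in> V \<Longrightarrow> \<sigma> f \<in> (\<circ>) g0 ` H"
    using translated_local_section[OF g0(1)] by metis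
  have "\<sigma> f \<in> \<Gamma>" if "f \<in> V" for f
    using coset[OF that] g0(1) H_subset comp_in_\<Gamma> by auto
  then have "continuous_map (subtopology T V) (subtopology TG \<Gamma>) \<sigma>"
    using \<sigma> openin_subset[OF V(1)] unfolding continuous_map_in_subtopology by auto
  then show "\<exists>V \<sigma>. openin T V \<and> y \<in> V \<and>
      continuous_map (subtopology T V) (subtopology TG \<Gamma>) \<sigma> \<and> (\<forall>v \<in> V. restr L (\<sigma> v) = v)"
    using V lifts g0(2) by blast
qed

lemma openin_restr_coset:
  assumes g: "g \<in> \<Gamma>"
  shows "openin T (restr L ` ((\<circ>) g ` H))"
  unfolding openin_subopen[of T "restr L ` ((\<circ>) g ` H)"]
proof
  fix b assume "b \<in> restr L ` ((\<circ>) g ` H)"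
  then obtain h where h: "h \<in> H" "b = restr L (g \<circ> h)" by blast
  have gh: "g \<circ> h \<in> \<Gamma>" using g h(1) H_subset comp_in_\<Gamma> by blast
  obtain V \<sigma> where V: "openin T V" "restr L (g \<circ> h) \<in> V"
    and lifts: "\<And>f. f \<in> V \<Longrightarrow> restr L (\<sigma> f) = f"
    and coset: "\<And>f. f \<in> V \<Longrightarrow> \<sigma> f \<in> (\<circ>) (g \<circ> h) ` H"
    using translated_local_section[OF gh] by metis
  have "V \<subseteq> restr L ` ((\<circ>) g ` H)"
  proof
    fix f assume f: "f \<in> V"
    then obtain h' where "h' \<in> H" "\<sigma> f = g \<circ> (h \<circ> h')" using coset by (auto simp: o_assoc)
    then show "f \<in> restr L ` ((\<circ>) g ` H)"
      using lifts[OF f] comp_in_H[OF h(1)] by (metis image_eqI)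
  qed
  then show "\<exists>W. openin T W \<and> b \<in> W \<and> W \<subseteq> restr L ` ((\<circ>) g ` H)"
    using V h(2) by blast
qed

lemma openin_emb_set: "openin T (emb_set H L)"
  using openin_restr_coset[OF id_in_\<Gamma>] by (simp add: emb_set_def)

lemma orbit_restr: "orbit (restr L g) = restr L ` ((\<lambda>h. h \<circ> g) ` H)"
  by (simp add: image_image emb_act_restr)

lemma emb_set_eq_orbit_incl: "emb_set H L = orbit (incl L)"
  by (simp add: emb_set_def incl_eq_restr_id orbit_restr)

lemma right_translate_subgroup:
  assumes h: "h \<in> H"
  shows "(\<lambda>k. k \<circ> h) ` H = H"
proof
  show "(\<lambda>k. k \<circ> h) ` H \<subseteq> H" using h comp_in_H by blast
  have "k = (k \<circ> inv h) \<circ> h" for k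
    using inv_comp_cancel h H_subset_topspace by (auto simp: o_assoc[symmetric])
  then show "H \<subseteq> (\<lambda>k. k \<circ> h) ` H" using h comp_in_H inv_in_H by blast
qed

lemma orbit_eq_if_member:
  assumes "y \<in> orbit f"
  shows "orbit y = orbit f"
proof -
  obtain h where h: "h \<in> H" "y = emb_act L h f" using assms by blast
  have "orbit y = (\<lambda>k. emb_act L k f) ` ((\<lambda>k. k \<circ> h) ` H)"
    by (simp add: h(2) emb_act_emb_act image_image)
  then show ?thesis using right_translate_subgroup[OF h(1)] by simp
qed

lemma right_coset_eq_left_coset:
  assumes normal: "is_normal_subgroup H \<Gamma>" and g: "g \<in> \<Gamma>"
  shows "(\<lambda>h. h \<circ> g) ` H = (\<circ>) g ` H"
proof -
  have conj: "k \<circ> h \<circ> inv k \<in> H" if "k \<in> \<Gamma>" "h \<in> H" for k h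
    using normal that unfolding is_normal_subgroup_def by blast
  have g_top: "g \<in> topspace TG" using g \<Gamma>_subset by blast
  show ?thesis
  proof
    show "(\<lambda>h. h \<circ> g) ` H \<subseteq> (\<circ>) g ` H"
    proof clarify
      fix h assume "h \<in> H"
      then have "inv g \<circ> h \<circ> inv (inv g) \<in> H" using conj inv_in_\<Gamma> g by blast
      moreover have "h \<circ> g = g \<circ> (inv g \<circ> h \<circ> inv (inv g))"
        by (simp add: inv_inv_eq bij g_top o_assoc comp_inv_cancel)
      ultimately show "h \<circ> g \<in> (\<circ>) g ` H" by blast
    qed
    show "(\<circ>) g ` H \<subseteq> (\<lambda>h. h \<circ> g) ` H"
    proof clarify
      fix h assume "h \<in> H"
      then have "g \<circ> h \<circ> inv g \<in> H" using conj g by blast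
      moreover have "g \<circ> h = (g \<circ> h \<circ> inv g) \<circ> g"
        by (simp add: g_top o_assoc[symmetric] inv_comp_cancel)
      ultimately show "g \<circ> h \<in> (\<lambda>h. h \<circ> g) ` H" by blast
    qed
  qed
qed

lemma openin_orbit:
  assumes "is_normal_subgroup H \<Gamma>" and "f \<in> topspace T"
  shows "openin T (orbit f)"
proof -
  obtain g where g: "g \<in> \<Gamma>" "f = restr L g" using assms(2) topspace_T by blast
  show ?thesis
    using openin_restr_coset[OF g(1)]
    by (simp add: g(2) orbit_restr right_coset_eq_left_coset[OF assms(1) g(1)])
qed

lemma closedin_orbit:
  assumes "is_normal_subgroup H \<Gamma>" and "f \<in> topspace T"
  shows "closedin T (orbit f)"
proof (rule closedin_if_open_partition[of T orbit, OF _ _ _ assms(2)])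
  show "openin T (orbit x)" if "x \<in> topspace T" for x
    using openin_orbit[OF assms(1) that] .
  show "x \<in> orbit x" if "x \<in> topspace T" for x
    using emb_act_id[OF that] id_in_H by (metis image_eqI)
  show "orbit y = orbit x" if "y \<in> orbit x" for x y
    using orbit_eq_if_member[OF that] .
qed

lemma emb_set_eq_connected_component:
  assumes normal: "is_normal_subgroup H \<Gamma>"
    and connected: "H \<subseteq> connected_component_of_set (subtopology TG \<Gamma>) id"
  shows "emb_set H L = connected_component_of_set T (incl L)"
proof
  let ?C = "connected_component_of_set (subtopology TG \<Gamma>) id"
  have "connectedin T (restr L ` ?C)"
    by (rule connectedin_continuous_map_image[OF restr_continuous connectedin_connected_component_of])
  moreover have "id \<in> ?C"
    using connected_component_of_refl \<Gamma>_subset id_in_\<Gamma> by fastforce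
  then have "incl L \<in> restr L ` ?C"
    unfolding incl_eq_restr_id by (rule imageI)
  ultimately have "restr L ` ?C \<subseteq> connected_component_of_set T (incl L)"
    by (rule connected_component_of_maximal)
  moreover have "emb_set H L \<subseteq> restr L ` ?C"
    unfolding emb_set_def using connected by (rule image_mono)
  ultimately show "emb_set H L \<subseteq> connected_component_of_set T (incl L)" by blast
next
  have "closedin T (emb_set H L)"
    unfolding emb_set_eq_orbit_incl using closedin_orbit[OF normal incl_in_topspace] .
  then have "connected_component_of_set T (incl L) \<subseteq> emb_set H L \<or>
      disjnt (connected_component_of_set T (incl L)) (emb_set H L)"
    by (rule connectedin_clopen_cases[OF connectedin_connected_component_of _ openin_emb_set])
  moreover have "incl L \<in> connected_component_of_set T (incl L)"
    using connected_component_of_refl incl_in_topspace by fastforce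
  moreover have "incl L \<in> emb_set H L"
    unfolding emb_set_def incl_eq_restr_id using id_in_H by (rule imageI)
  ultimately show "connected_component_of_set T (incl L) \<subseteq> emb_set H L"
    unfolding disjnt_iff by blast
qed

lemma homeomorphic_map_section_trivialisation:
  assumes V: "V \<subseteq> topspace T"
    and \<sigma>: "continuous_map (subtopology T V) TG \<sigma>"
    and \<sigma>_in_H: "\<And>f. f \<in> V \<Longrightarrow> \<sigma> f \<in> H"
    and lifts: "\<And>f. f \<in> V \<Longrightarrow> restr L (\<sigma> f) = f"
  shows "homeomorphic_map (subtopology TG {p \<in> H. restr L p \<in> V})
      (prod_topology (subtopology T V) (subtopology TG (fixing H L)))
      (\<lambda>p. (restr L p, inv (\<sigma> (restr L p)) \<circ> p))"
proof -
  define D where "D = {p \<in> H. restr L p \<in> V}"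
  define \<phi> where "\<phi> p = (restr L p, inv (\<sigma> (restr L p)) \<circ> p)" for p
  define \<psi> :: "('a \<Rightarrow> 'a) \<times> ('a \<Rightarrow> 'a) \<Rightarrow> 'a \<Rightarrow> 'a"
    where "\<psi> = (\<lambda>(f, k). \<sigma> f \<circ> k)"
  have top_D: "topspace (subtopology TG D) = D"
    using H_subset_topspace by (auto simp: D_def)
  have top_prod: "topspace (prod_topology (subtopology T V) (subtopology TG (fixing H L)))
      = V \<times> fixing H L"
    using V H_subset_topspace by (auto simp: fixing_def)
  have \<sigma>_top: "\<sigma> f \<in> topspace TG" if "f \<in> V" for f
    using \<sigma>_in_H[OF that] H_subset_topspace by blast
  have restr_D: "continuous_map (subtopology TG D) (subtopology T V) (restr L)"
    unfolding continuous_map_in_subtopology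
    using continuous_map_from_subtopology_mono[OF restr_continuous, of D] H_subset top_D
    by (auto simp: D_def)
  have fixing_snd: "inv (\<sigma> (restr L p)) \<circ> p \<in> fixing H L" if p: "p \<in> D" for p
  proof -
    let ?f = "restr L p"
    have f: "?f \<in> V" and "p \<in> H" using p by (auto simp: D_def)
    then have "inv (\<sigma> ?f) \<circ> p \<in> H" using \<sigma>_in_H inv_in_H comp_in_H by blast
    moreover have "inv (\<sigma> ?f) (p x) = x" if "x \<in> L" for x
    proof -
      have "\<sigma> ?f x = p x" using lifts[OF f] that by (simp add: restr_eq_iff)
      then show ?thesis using inv_comp_cancel[OF \<sigma>_top[OF f]] by (metis comp_apply id_apply)
    qed
    ultimately show ?thesis by (simp add: fixing_def)
  qed
  have "continuous_map (subtopology TG D) TG (\<lambda>p. inv (\<sigma> (restr L p)) \<circ> p)"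
    by (intro continuous_map_comp continuous_map_inv
        continuous_map_compose[OF restr_D \<sigma>, unfolded o_def] continuous_map_from_subtopology
        continuous_map_id[unfolded id_def])
  then have \<phi>_continuous:
    "continuous_map (subtopology TG D) (prod_topology (subtopology T V) (subtopology TG (fixing H L))) \<phi>"
    unfolding \<phi>_def continuous_map_paired
    using restr_D fixing_snd top_D by (auto simp: continuous_map_in_subtopology)
  have "continuous_map (prod_topology (subtopology T V) (subtopology TG (fixing H L))) TG \<psi>"
    unfolding \<psi>_def case_prod_beta
    by (intro continuous_map_comp continuous_map_compose[OF continuous_map_fst \<sigma>, unfolded o_def]
        continuous_map_compose[OF continuous_map_snd continuous_map_id_subt, unfolded o_def id_def])
  moreover have "\<psi> (f, k) \<in> D" if "f \<in> V" and k: "k \<in> fixing H L" for f k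
  proof -
    have "k \<in> H" using k by (simp add: fixing_def)
    then show ?thesis
      using that \<sigma>_in_H comp_in_H lifts restr_comp_fixing[OF k] by (simp add: \<psi>_def D_def)
  qed
  ultimately have \<psi>_continuous:
    "continuous_map (prod_topology (subtopology T V) (subtopology TG (fixing H L))) (subtopology TG D) \<psi>"
    unfolding continuous_map_in_subtopology top_prod by auto
  have "\<psi> (\<phi> p) = p" if "p \<in> D" for p
    using that comp_inv_cancel[OF \<sigma>_top] by (auto simp: \<phi>_def \<psi>_def D_def o_assoc)
  moreover have "\<phi> (\<psi> (f, k)) = (f, k)" if f: "f \<in> V" and k: "k \<in> fixing H L" for f k
  proof -
    have "restr L (\<sigma> f \<circ> k) = f" using lifts[OF f] restr_comp_fixing[OF k] by simp
    then show ?thesis using inv_comp_cancel[OF \<sigma>_top[OF f]] by (simp add: \<phi>_def \<psi>_def o_assoc)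
  qed
  ultimately have "homeomorphic_maps (subtopology TG D)
      (prod_topology (subtopology T V) (subtopology TG (fixing H L))) \<phi> \<psi>"
    unfolding homeomorphic_maps_def top_D top_prod using \<phi>_continuous \<psi>_continuous by blast
  then show ?thesis
    unfolding homeomorphic_map_maps D_def \<phi>_def by blast
qed

lemma restr_locally_trivial:
  assumes "b \<in> emb_set H L"
  shows "\<exists>V \<phi>. openin (subtopology T (emb_set H L)) V \<and> b \<in> V \<and>
    homeomorphic_map (subtopology (subtopology TG H) {p \<in> topspace (subtopology TG H). restr L p \<in> V})
      (prod_topology (subtopology (subtopology T (emb_set H L)) V) (subtopology TG (fixing H L))) \<phi> \<and>
    (\<forall>p \<in> topspace (subtopology TG H). restr L p \<in> V \<longrightarrow> fst (\<phi> p) = restr L p) \<and>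
    (\<forall>p \<in> topspace (subtopology TG H). restr L p \<in> V \<longrightarrow>
       (\<forall>k \<in> topspace (subtopology TG (fixing H L)). snd (\<phi> (p \<circ> k)) = snd (\<phi> p) \<circ> k))"
proof -
  obtain h0 where h0: "h0 \<in> H" "b = restr L h0" using assms by (auto simp: emb_set_def)
  obtain V \<sigma> where V: "openin T V" "restr L h0 \<in> V"
    and \<sigma>: "continuous_map (subtopology T V) TG \<sigma>"
    and lifts: "\<And>f. f \<in> V \<Longrightarrow> restr L (\<sigma> f) = f"
    and coset: "\<And>f. f \<in> V \<Longrightarrow> \<sigma> f \<in> (\<circ>) h0 ` H"
    using translated_local_section[OF subsetD[OF H_subset h0(1)]] by metis
  have \<sigma>_in_H: "\<sigma> f \<in> H" if f: "f \<in> V" for f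
  proof -
    obtain h where "h \<in> H" "\<sigma> f = h0 \<circ> h" using coset[OF f] by blast
    then show ?thesis using h0(1) comp_in_H by simp
  qed
  have "V \<subseteq> emb_set H L"
  proof
    fix f assume f: "f \<in> V"
    show "f \<in> emb_set H L"
      unfolding emb_set_def using imageI[OF \<sigma>_in_H[OF f], of "restr L"] lifts[OF f] by simp
  qed
  then have open_V: "openin (subtopology T (emb_set H L)) V"
    by (simp add: openin_open_subtopology[OF openin_emb_set] V(1))
  have "subtopology (subtopology T (emb_set H L)) V = subtopology T V"
    using \<open>V \<subseteq> emb_set H L\<close> by (simp add: subtopology_subtopology Int_absorb1)
  moreover have "H \<inter> {p \<in> H. restr L p \<in> V} = {p \<in> H. restr L p \<in> V}"
    by blast
  moreover have "homeomorphic_map (subtopology TG {p \<in> H. restr L p \<in> V})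
      (prod_topology (subtopology T V) (subtopology TG (fixing H L)))
      (\<lambda>p. (restr L p, inv (\<sigma> (restr L p)) \<circ> p))"
    using homeomorphic_map_section_trivialisation[OF openin_subset[OF V(1)] \<sigma> \<sigma>_in_H lifts] .
  moreover have "inv (\<sigma> (restr L (p \<circ> k))) \<circ> (p \<circ> k) = inv (\<sigma> (restr L p)) \<circ> p \<circ> k"
    if "k \<in> fixing H L" for p k
    using restr_comp_fixing[OF that] by (simp add: o_assoc)
  ultimately show ?thesis
    using open_V V(2) h0(2) topspace_subtopology_H topspace_subtopology_fixing
    by (intro exI[of _ V] exI[of _ "\<lambda>p. (restr L p, inv (\<sigma> (restr L p)) \<circ> p)"])
      (simp add: subtopology_subtopology)
qed

lemma principal_bundle_restr:
  "principal_bundle (subtopology TG H) (subtopology T (emb_set H L))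
     (subtopology TG (fixing H L)) (\<circ>) (\<circ>) (restr L)"
proof -
  have top_E: "topspace (subtopology T (emb_set H L)) = emb_set H L"
    using openin_subset[OF openin_emb_set] by auto
  have "continuous_map (subtopology TG H) T (restr L)"
    using continuous_map_from_subtopology_mono[OF restr_continuous H_subset] .
  then have restr_H: "continuous_map (subtopology TG H) (subtopology T (emb_set H L)) (restr L)"
    unfolding continuous_map_in_subtopology topspace_subtopology_H by (simp add: emb_set_def)
  have "p \<circ> k \<in> H" if "p \<in> H" and "k \<in> fixing H L" for p k
    using that fixing_subset comp_in_H by blast
  then have "(\<lambda>(p, k). p \<circ> k) \<in> H \<times> fixing H L \<rightarrow> H"
    by auto
  then have action: "continuous_map (prod_topology (subtopology TG H) (subtopology TG (fixing H L)))
      (subtopology TG H) (\<lambda>(p, k). p \<circ> k)"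
    unfolding continuous_map_in_subtopology topspace_prod_topology
      topspace_subtopology_H topspace_subtopology_fixing
    using comp_continuous_on by (intro conjI)
  have "restr L ` topspace (subtopology TG H) = topspace (subtopology T (emb_set H L))"
    by (simp only: topspace_subtopology_H top_E) (simp add: emb_set_def)
  moreover have "\<forall>p \<in> topspace (subtopology TG H). \<forall>k \<in> topspace (subtopology TG (fixing H L)).
      restr L (p \<circ> k) = restr L p"
    unfolding topspace_subtopology_fixing by (simp add: restr_comp_fixing)
  ultimately show ?thesis
    unfolding principal_bundle_def top_E
    using restr_H action restr_locally_trivial by blast
qed

end

theorem lemma3p1:
  fixes TM :: "'m topology" and TG :: "('m \<Rightarrow> 'm) topology"
    and K L N :: "'m set" and T :: "('m \<Rightarrow> 'm) topology"
    and H :: "('m \<Rightarrow> 'm) set" and U :: "('m \<Rightarrow> 'm) set"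
    and s :: "('m \<Rightarrow> 'm) \<Rightarrow> ('m \<Rightarrow> 'm)"
  defines "GKN \<equiv> supp_group (topspace TG) K N"
  assumes tg: "transformation_group TM TG"
    and KL: "K \<subseteq> L" and LN: "L \<subseteq> N"
    and adm: "admissible L TG GKN T"
    and sub: "is_subgroup H GKN"
    and sec: "local_section_at (subtopology TG GKN) T (restr L) (incl L) U s"
    and secH: "s ` U \<subseteq> H"
  shows
    "principal_bundle (subtopology TG H) (subtopology T (emb_set H L))
        (subtopology TG (fixing H L)) (\<circ>) (\<circ>) (restr L)
     \<and> quotient_map (subtopology TG GKN) T (restr L)
     \<and> openin T (emb_set H L)
     \<and> (is_normal_subgroup H GKN \<longrightarrow>
          (\<forall>f \<in> topspace T.
              closedin T ((\<lambda>h. emb_act L h f) ` H) \<and> openin T ((\<lambda>h. emb_act L h f) ` H))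
          \<and> (H \<subseteq> connected_component_of_set (subtopology TG GKN) id \<longrightarrow>
               emb_set H L = connected_component_of_set T (incl L)))"
proof -
  interpret topological_bij_group TG
    using tg by (rule transformation_group_imp_topological_bij_group)
  interpret restriction_with_section TG GKN L T H U s
  proof
    show "is_subgroup GKN (topspace TG)"
      unfolding GKN_def by (rule is_subgroup_supp_group)
  qed (fact adm sub sec secH)+
  have "closedin T (orbit f) \<and> openin T (orbit f)"
    if "is_normal_subgroup H GKN" and "f \<in> topspace T" for f
    using closedin_orbit[OF that] openin_orbit[OF that] by blast
  then show ?thesis
    using principal_bundle_restr quotient_map_restr openin_emb_set emb_set_eq_connected_component
    by blast
qed

end
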